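(* Let $G$ be a finite soluble group, $N$ a minimal normal subgroup of $G$, $x\in G\setminus\{1\}$ with $\mathrm d(x,N)>3$ in $\Gamma(G)$, and $y\in\langle x\rangle$ of prime order. Then $C_G(y)N$ is a Frobenius group with Frobenius complement $C_G(y)$, and $|C_G(y)|$ is odd.
   Context: For a group $G$, the normalising graph $\Gamma(G)$ has vertex set $G\setminus\{1\}$, and two distinct vertices $x,y$ are adjacent if and only if $\langle x\rangle$ normalises $\langle y\rangle$ or $\langle y\rangle$ normalises $\langle x\rangle$. $\mathrm d$ is graph distance (infinite if there is no path), and $\mathrm d(x,N)=\min\{\mathrm d(x,n):n\in N\setminus\{1\}\}$. *)

theory Defs
  imports "HOL-Algebra.Algebra" "HOL-Library.Extended_Nat"
begin

definition cyc :: "('a, 'b) monoid_scheme \<Rightarrow> 'a \<Rightarrow> 'a set" where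
  "cyc G x = generate G {x}"

definition normalises :: "('a, 'b) monoid_scheme \<Rightarrow> 'a set \<Rightarrow> 'a set \<Rightarrow> bool" where
  "normalises G H K \<longleftrightarrow>
     (\<forall>h\<in>H. (\<lambda>k. h \<otimes>\<^bsub>G\<^esub> k \<otimes>\<^bsub>G\<^esub> inv\<^bsub>G\<^esub> h) ` K = K)"

(* adjacency in the normalising graph Gamma(G), vertex set G \ {1} *)
definition norm_adj :: "('a, 'b) monoid_scheme \<Rightarrow> 'a \<Rightarrow> 'a \<Rightarrow> bool" where
  "norm_adj G x y \<longleftrightarrow>
     x \<in> carrier G - {\<one>\<^bsub>G\<^esub>} \<and> y \<in> carrier G - {\<one>\<^bsub>G\<^esub>} \<and> x \<noteq> y \<and>
     (normalises G (cyc G x) (cyc G y) \<or> normalises G (cyc G y) (cyc G x))"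

definition norm_walk :: "('a, 'b) monoid_scheme \<Rightarrow> 'a list \<Rightarrow> 'a \<Rightarrow> 'a \<Rightarrow> nat \<Rightarrow> bool" where
  "norm_walk G p x y n \<longleftrightarrow>
     length p = Suc n \<and> hd p = x \<and> last p = y \<and>
     set p \<subseteq> carrier G - {\<one>\<^bsub>G\<^esub>} \<and>
     (\<forall>i < n. norm_adj G (p ! i) (p ! Suc i))"

(* graph distance in Gamma(G) (infinity if there is no path) *)
definition norm_dist :: "('a, 'b) monoid_scheme \<Rightarrow> 'a \<Rightarrow> 'a \<Rightarrow> enat" where
  "norm_dist G x y = Inf {enat n | n. \<exists>p. norm_walk G p x y n}"

definition norm_dist_set :: "('a, 'b) monoid_scheme \<Rightarrow> 'a \<Rightarrow> 'a set \<Rightarrow> enat" where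
  "norm_dist_set G x N = Inf (norm_dist G x ` (N - {\<one>\<^bsub>G\<^esub>}))"

definition minimal_normal :: "('a, 'b) monoid_scheme \<Rightarrow> 'a set \<Rightarrow> bool" where
  "minimal_normal G N \<longleftrightarrow>
     N \<lhd> G \<and> N \<noteq> {\<one>\<^bsub>G\<^esub>} \<and>
     (\<forall>M. M \<lhd> G \<and> M \<subseteq> N \<longrightarrow> M = {\<one>\<^bsub>G\<^esub>} \<or> M = N)"

definition centraliser :: "('a, 'b) monoid_scheme \<Rightarrow> 'a \<Rightarrow> 'a set" where
  "centraliser G y = {g \<in> carrier G. g \<otimes>\<^bsub>G\<^esub> y = y \<otimes>\<^bsub>G\<^esub> g}"

definition frobenius_with_complement :: "('a, 'b) monoid_scheme \<Rightarrow> 'a set \<Rightarrow> 'a set \<Rightarrow> bool" where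
  "frobenius_with_complement G K H \<longleftrightarrow>
     subgroup K G \<and> subgroup H G \<and> H \<subseteq> K \<and> H \<noteq> {\<one>\<^bsub>G\<^esub>} \<and> H \<noteq> K \<and>
     (\<forall>g \<in> K - H. H \<inter> (\<lambda>h. g \<otimes>\<^bsub>G\<^esub> h \<otimes>\<^bsub>G\<^esub> inv\<^bsub>G\<^esub> g) ` H = {\<one>\<^bsub>G\<^esub>})"

end

theory Submission
  imports Defs
begin

text \<open>
  Let \<open>C = C\<^sub>G(y)\<close>. Every \<open>h \<in> C - 1\<close> is joined to \<open>x\<close> by the path \<open>x, y, h\<close> of
  commuting elements, so \<open>d(x, N) > 3\<close> forbids \<open>h\<close> to be equal or adjacent to any
  \<open>n \<in> N - 1\<close>. In particular \<open>C\<close> acts fixed-point-freely by conjugation on \<open>N\<close>, which makes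
  \<open>CN\<close> a Frobenius group with complement \<open>C\<close>. An involution of \<open>C\<close> would act
  fixed-point-freely on \<open>N\<close>, hence invert \<open>N\<close>, hence normalise every cyclic subgroup of \<open>N\<close>
  and so be adjacent to \<open>N - 1\<close>; so \<open>|C|\<close> is odd.
\<close>

lemma even_card_if_fixpoint_free_involution:
  assumes "finite S"
    and "\<And>s. s \<in> S \<Longrightarrow> f s \<in> S" "\<And>s. s \<in> S \<Longrightarrow> f s \<noteq> s" "\<And>s. s \<in> S \<Longrightarrow> f (f s) = s"
  shows "even (card S)"
  using assms
proof (induction "card S" arbitrary: S rule: less_induct)
  case less
  show ?case
  proof (cases "S = {}")
    case False
    then obtain s where s: "s \<in> S" by auto
    let ?S' = "S - {s, f s}"
    have "card {s, f s} = 2" using less.prems(3)[OF s] by (simp add: card_insert_if)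
    then have card_S: "card S = card ?S' + 2"
      using less.prems s card_Diff_subset[of "{s, f s}" S] card_mono[of S "{s, f s}"] by auto
    have "even (card ?S')"
    proof (rule less.hyps)
      fix r assume "r \<in> ?S'"
      then have r: "r \<in> S" "r \<noteq> s" "r \<noteq> f s" by auto
      then have "f r \<noteq> s" "f r \<noteq> f s" using less.prems(4) s by metis+
      then show "f r \<in> ?S'" using r less.prems(2) by auto
      show "f r \<noteq> r" "f (f r) = r" using r less.prems(3,4) by auto
    qed (use card_S less.prems(1) in auto)
    then show ?thesis using card_S by simp
  qed simp
qed

lemma norm_dist_self:
  assumes "a \<in> carrier G - {\<one>\<^bsub>G\<^esub>}"
  shows "norm_dist G a a = 0"
proof -
  have "norm_walk G [a] a a 0" using assms unfolding norm_walk_def by auto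
  then have "norm_dist G a a \<le> enat 0" unfolding norm_dist_def by (auto intro: Inf_lower)
  then show ?thesis by (metis le_zero_eq zero_enat_def)
qed

lemma norm_walk_snoc:
  assumes walk: "norm_walk G p a b n" and adj: "norm_adj G b c"
  shows "norm_walk G (p @ [c]) a c (Suc n)"
proof -
  have len: "length p = Suc n" and "last p = b" and "p \<noteq> []"
    using walk unfolding norm_walk_def by auto
  then have "p ! n = b" by (simp add: last_conv_nth)
  then have "\<forall>i < Suc n. norm_adj G ((p @ [c]) ! i) ((p @ [c]) ! Suc i)"
    using walk adj len unfolding norm_walk_def by (auto simp: nth_append less_Suc_eq)
  moreover have "c \<in> carrier G - {\<one>\<^bsub>G\<^esub>}" using adj unfolding norm_adj_def by auto
  ultimately show ?thesis using walk len \<open>p \<noteq> []\<close> unfolding norm_walk_def by auto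
qed

lemma norm_dist_step:
  assumes "b = c \<or> norm_adj G b c"
  shows "norm_dist G a c \<le> norm_dist G a b + 1"
proof (cases "norm_dist G a b = \<infinity>")
  case False
  let ?lengths = "{enat n | n. \<exists>p. norm_walk G p a b n}"
  have walks: "?lengths \<noteq> {}" using False unfolding norm_dist_def by (metis Inf_empty top_enat_def)
  then obtain l where "l \<in> ?lengths" by blast
  then have "(LEAST l. l \<in> ?lengths) \<in> ?lengths" by (rule LeastI[where P = "\<lambda>l. l \<in> ?lengths"])
  then have "norm_dist G a b \<in> ?lengths" unfolding norm_dist_def Inf_enat_def if_not_P[OF walks] .
  then obtain p n where walk: "norm_walk G p a b n" and dist: "norm_dist G a b = enat n" by auto
  have "norm_dist G a c \<le> enat (Suc n)"
  proof (cases "b = c")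
    case True
    then have "norm_dist G a c \<le> enat n" using walk unfolding norm_dist_def by (auto intro: Inf_lower)
    then show ?thesis by (simp add: order_trans)
  next
    case False
    then have "norm_walk G (p @ [c]) a c (Suc n)" using walk assms by (simp add: norm_walk_snoc)
    then show ?thesis unfolding norm_dist_def by (auto intro: Inf_lower)
  qed
  then show ?thesis using dist by (simp add: eSuc_enat[symmetric] eSuc_plus_1)
qed simp

context group
begin

lemma inv_mult_cancel: "a \<in> carrier G \<Longrightarrow> z \<in> carrier G \<Longrightarrow> inv a \<otimes> (a \<otimes> z) = z"
  by (simp add: m_assoc[symmetric])

lemma mult_inv_cancel: "a \<in> carrier G \<Longrightarrow> z \<in> carrier G \<Longrightarrow> a \<otimes> (inv a \<otimes> z) = z"
  by (simp add: m_assoc[symmetric])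

lemma conjugate_eq_iff_commute:
  "g \<in> carrier G \<Longrightarrow> h \<in> carrier G \<Longrightarrow> g \<otimes> h \<otimes> inv g = h \<longleftrightarrow> g \<otimes> h = h \<otimes> g"
  by (simp add: inv_solve_right')

lemma subgroup_centraliser:
  assumes "a \<in> carrier G"
  shows "subgroup (centraliser G a) G"
proof (rule subgroupI)
  fix g assume "g \<in> centraliser G a"
  then have g: "g \<in> carrier G" "g \<otimes> a = a \<otimes> g" unfolding centraliser_def by auto
  then have "inv g \<otimes> (g \<otimes> a) \<otimes> inv g = inv g \<otimes> (a \<otimes> g) \<otimes> inv g" by simp
  then have "inv g \<otimes> a = a \<otimes> inv g" using g(1) assms by (simp add: m_assoc inv_mult_cancel)
  then show "inv g \<in> centraliser G a" using g unfolding centraliser_def by auto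
next
  fix g h assume "g \<in> centraliser G a" "h \<in> centraliser G a"
  then show "g \<otimes> h \<in> centraliser G a"
    using assms unfolding centraliser_def by (auto simp: m_assoc) (metis m_assoc)
qed (use assms in \<open>auto simp: centraliser_def\<close>)

lemma cyc_subset_carrier: "g \<in> carrier G \<Longrightarrow> cyc G g \<subseteq> carrier G"
  unfolding cyc_def by (rule generate_incl) auto

lemma cyc_subset_centraliser:
  assumes "a \<in> carrier G" "g \<in> carrier G" "g \<otimes> a = a \<otimes> g"
  shows "cyc G g \<subseteq> centraliser G a"
  unfolding cyc_def using assms subgroup_centraliser
  by (intro generate_subgroup_incl) (auto simp: centraliser_def)

lemma normalises_cyc_if_commute:
  assumes g: "g \<in> carrier G" and z: "z \<in> carrier G" and comm: "g \<otimes> z = z \<otimes> g"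
  shows "normalises G (cyc G g) (cyc G z)"
  unfolding normalises_def
proof
  fix h assume "h \<in> cyc G g"
  then have h: "h \<in> carrier G" "h \<otimes> z = z \<otimes> h"
    using cyc_subset_centraliser[OF z g comm] unfolding centraliser_def by auto
  have "h \<otimes> k \<otimes> inv h = k" if "k \<in> cyc G z" for k
    using that cyc_subset_centraliser[OF h(1) z h(2)[symmetric]] h(1) unfolding centraliser_def
    by (auto simp: conjugate_eq_iff_commute)
  then show "(\<lambda>k. h \<otimes> k \<otimes> inv h) ` cyc G z = cyc G z" by simp
qed

lemma eq_or_norm_adj_if_commute:
  assumes "a \<in> carrier G - {\<one>}" "b \<in> carrier G - {\<one>}" "a \<otimes> b = b \<otimes> a"
  shows "a = b \<or> norm_adj G a b"
  using assms normalises_cyc_if_commute unfolding norm_adj_def by auto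

lemma normalises_if_involution_inverts:
  assumes H: "subgroup H G" and t: "t \<in> carrier G" "t \<otimes> t = \<one>"
    and inverts: "\<And>k. k \<in> H \<Longrightarrow> t \<otimes> k \<otimes> inv t = inv k"
  shows "normalises G (cyc G t) H"
  unfolding normalises_def
proof
  fix h assume h: "h \<in> cyc G t"
  have inv_t: "inv t = t" using t by (simp add: inv_equality)
  have "cyc G t \<subseteq> {\<one>, t}"
    unfolding cyc_def using t inv_t by (intro generate_subgroup_incl subgroupI) auto
  then have "h = \<one> \<or> h = t" using h by blast
  moreover have "(\<lambda>k. \<one> \<otimes> k \<otimes> inv \<one>) ` H = H"
    using subgroup.mem_carrier[OF H] by (auto simp: image_iff)
  moreover have "(\<lambda>k. t \<otimes> k \<otimes> inv t) ` H = H"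
  proof
    show "(\<lambda>k. t \<otimes> k \<otimes> inv t) ` H \<subseteq> H" using inverts subgroup.m_inv_closed[OF H] by auto
    show "H \<subseteq> (\<lambda>k. t \<otimes> k \<otimes> inv t) ` H"
    proof
      fix k assume "k \<in> H"
      then have "k = t \<otimes> inv k \<otimes> inv t" "inv k \<in> H"
        using inverts[of "inv k"] subgroup.m_inv_closed[OF H] subgroup.mem_carrier[OF H] by auto
      then show "k \<in> (\<lambda>k. t \<otimes> k \<otimes> inv t) ` H" by blast
    qed
  qed
  ultimately show "(\<lambda>k. h \<otimes> k \<otimes> inv h) ` H = H" by blast
qed

lemma involution_if_even_card:
  assumes H: "subgroup H G" and "finite H" "even (card H)"
  shows "\<exists>t\<in>H. t \<noteq> \<one> \<and> t \<otimes> t = \<one>"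
proof (rule ccontr)
  assume none: "\<not> ?thesis"
  have H_carr: "H \<subseteq> carrier G" using H by (rule subgroup.subset)
  let ?S = "{g\<in>H. inv g \<noteq> g}"
  have trivial: "g = \<one>" if "g \<in> H" "inv g = g" for g
  proof -
    have "g \<otimes> g = \<one>" using that H_carr by (metis r_inv subsetD)
    then show ?thesis using none that(1) by blast
  qed
  have "H = insert \<one> ?S"
  proof (intro equalityI subsetI)
    fix g assume "g \<in> H"
    then show "g \<in> insert \<one> ?S" using trivial by blast
  qed (use subgroup.one_closed[OF H] in blast)
  moreover have "card (insert \<one> ?S) = Suc (card ?S)"
    using \<open>finite H\<close> by (intro card_insert_disjoint) auto
  moreover have "even (card ?S)"
  proof (rule even_card_if_fixpoint_free_involution[where f = "\<lambda>g. inv g"])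
    fix g assume "g \<in> ?S"
    then have "g \<in> H" "g \<in> carrier G" "inv g \<noteq> g" using H_carr by auto
    then show "inv g \<in> ?S" "inv g \<noteq> g" "inv (inv g) = g"
      using subgroup.m_inv_closed[OF H] by auto
  qed (use \<open>finite H\<close> in auto)
  ultimately show False using assms by simp
qed

text \<open>
  The map \<open>n \<mapsto> n\<inverse> (t n t\<inverse>)\<close> is injective on \<open>N\<close> because \<open>t\<close> centralises no
  nontrivial element of \<open>N\<close>, hence onto; as \<open>t\<^sup>2 = 1\<close>, \<open>t\<close> inverts each of its values.
\<close>
lemma fixed_point_free_involution_inverts:
  assumes N: "N \<lhd> G" "finite N" and t: "t \<in> carrier G" "t \<otimes> t = \<one>"
    and fpf: "\<And>m. m \<in> N \<Longrightarrow> t \<otimes> m = m \<otimes> t \<Longrightarrow> m = \<one>"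
    and m: "m \<in> N"
  shows "t \<otimes> m \<otimes> inv t = inv m"
proof -
  have sub: "subgroup N G" using N normal_imp_subgroup by blast
  have inv_t: "inv t = t" using t by (simp add: inv_equality)
  define f where "f n = inv n \<otimes> (t \<otimes> n \<otimes> inv t)" for n
  have "f n \<in> N" if "n \<in> N" for n
    unfolding f_def using that sub normal.inv_op_closed2[OF N(1) t(1)]
    by (simp add: subgroup.m_closed subgroup.m_inv_closed)
  then have f_into: "f ` N \<subseteq> N" by auto
  have "inj_on f N"
  proof
    fix a b assume a: "a \<in> N" and b: "b \<in> N" and eq: "f a = f b"
    have ab: "a \<in> carrier G" "b \<in> carrier G" using a b subgroup.mem_carrier[OF sub] by auto
    let ?m = "b \<otimes> inv a"
    have "b \<otimes> f a \<otimes> (t \<otimes> inv a \<otimes> inv t) = b \<otimes> f b \<otimes> (t \<otimes> inv a \<otimes> inv t)"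
      by (simp only: eq)
    then have m_eq: "?m = t \<otimes> (b \<otimes> (inv a \<otimes> inv t))"
      using ab t unfolding f_def by (simp add: m_assoc inv_mult_cancel mult_inv_cancel)
    have "t \<otimes> ?m \<otimes> inv t = t \<otimes> (b \<otimes> (inv a \<otimes> inv t))" using ab t by (simp add: m_assoc)
    also have "\<dots> = ?m" by (rule m_eq[symmetric])
    finally have "t \<otimes> ?m = ?m \<otimes> t" using ab t by (simp add: conjugate_eq_iff_commute)
    moreover have "?m \<in> N" using sub a b by (simp add: subgroup.m_closed subgroup.m_inv_closed)
    ultimately have "?m = \<one>" using fpf by blast
    then show "a = b" using ab by (simp add: inv_solve_right')
  qed
  then have "f ` N = N" using f_into N(2) by (simp add: endo_inj_surj)
  then obtain n where "n \<in> N" and m_eq: "m = f n" using m by blast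
  then have "n \<in> carrier G" using subgroup.mem_carrier[OF sub] by blast
  have tt: "t \<otimes> (t \<otimes> z) = z" if "z \<in> carrier G" for z
    using t that by (simp add: m_assoc[symmetric])
  show ?thesis
    unfolding m_eq f_def using \<open>n \<in> carrier G\<close> t inv_t by (simp add: m_assoc inv_mult_group tt)
qed

lemma conjugate_inter_complement_trivial:
  assumes C: "subgroup C G" and N: "N \<lhd> G"
    and fpf: "\<And>h n. h \<in> C \<Longrightarrow> n \<in> N \<Longrightarrow> h \<otimes> n = n \<otimes> h \<Longrightarrow> h = \<one> \<or> n = \<one>"
    and c: "c \<in> C" and n: "n \<in> N" "n \<noteq> \<one>" and k: "k \<in> C"
    and conj_in: "(c \<otimes> n) \<otimes> k \<otimes> inv (c \<otimes> n) \<in> C"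
  shows "k = \<one>"
proof -
  have sub: "subgroup N G" using N normal_imp_subgroup by blast
  have carr: "c \<in> carrier G" "n \<in> carrier G" "k \<in> carrier G"
    using c n k subgroup.mem_carrier[OF C] subgroup.mem_carrier[OF sub] by auto
  have "inv c \<otimes> ((c \<otimes> n) \<otimes> k \<otimes> inv (c \<otimes> n)) \<otimes> c \<in> C"
    using C c conj_in by (simp add: subgroup.m_closed subgroup.m_inv_closed)
  then have "n \<otimes> k \<otimes> inv n \<in> C"
    using carr by (simp add: m_assoc inv_mult_group inv_mult_cancel)
  then have "n \<otimes> k \<otimes> inv n \<otimes> inv k \<in> C" using C k by (simp add: subgroup.m_closed subgroup.m_inv_closed)
  moreover have "n \<otimes> (k \<otimes> inv n \<otimes> inv k) \<in> N"
    using normal.inv_op_closed2[OF N carr(3)] sub n by (simp add: subgroup.m_closed subgroup.m_inv_closed)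
  then have "n \<otimes> k \<otimes> inv n \<otimes> inv k \<in> N" using carr by (simp add: m_assoc)
  \<comment> \<open>an element of \<open>C \<inter> N\<close> commutes with itself, so it is trivial\<close>
  ultimately have "n \<otimes> k \<otimes> inv n \<otimes> inv k = \<one>" using fpf by blast
  then have "n \<otimes> k \<otimes> inv n = k" using carr by (simp add: inv_solve_right')
  then have "n \<otimes> k = k \<otimes> n" using carr by (simp add: conjugate_eq_iff_commute)
  then show "k = \<one>" using fpf[OF k n(1)] n(2) by auto
qed

lemma frobenius_if_fixed_point_free:
  assumes C: "subgroup C G" "C \<noteq> {\<one>}" and N: "N \<lhd> G" "N \<noteq> {\<one>}"
    and fpf: "\<And>h n. h \<in> C \<Longrightarrow> n \<in> N \<Longrightarrow> h \<otimes> n = n \<otimes> h \<Longrightarrow> h = \<one> \<or> n = \<one>"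
  shows "frobenius_with_complement G (C <#> N) C"
proof -
  have sub: "subgroup N G" using N normal_imp_subgroup by blast
  have "subgroup (C <#> N) G" using commut_normal[OF C(1) N(1)] mult_norm_subgroup[OF N(1) C(1)] by simp
  moreover have "C \<subseteq> C <#> N"
    using subgroup.one_closed[OF sub] subgroup.mem_carrier[OF C(1)] unfolding set_mult_def by force
  moreover have "C \<noteq> C <#> N"
  proof -
    obtain n where n: "n \<in> N" "n \<noteq> \<one>" using N(2) subgroup.one_closed[OF sub] by blast
    then have "n \<in> C <#> N"
      using subgroup.one_closed[OF C(1)] subgroup.mem_carrier[OF sub] unfolding set_mult_def by force
    moreover have "n \<notin> C" using fpf n subgroup.mem_carrier[OF sub] by blast
    ultimately show ?thesis by blast
  qed
  moreover have "C \<inter> (\<lambda>h. g \<otimes> h \<otimes> inv g) ` C = {\<one>}" if g: "g \<in> (C <#> N) - C" for g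
  proof -
    obtain c n where c: "c \<in> C" and n: "n \<in> N" and g_eq: "g = c \<otimes> n"
      using g unfolding set_mult_def by auto
    have "n \<noteq> \<one>" using g g_eq c subgroup.mem_carrier[OF C(1)] by auto
    then have trivial: "k = \<one>" if "k \<in> C" "g \<otimes> k \<otimes> inv g \<in> C" for k
      using conjugate_inter_complement_trivial[OF C(1) N(1) fpf c n] that g_eq by blast
    have "g \<in> carrier G" using g subgroup.mem_carrier[OF \<open>subgroup (C <#> N) G\<close>] by auto
    show ?thesis
    proof
      show "C \<inter> (\<lambda>h. g \<otimes> h \<otimes> inv g) ` C \<subseteq> {\<one>}"
      proof
        fix h assume "h \<in> C \<inter> (\<lambda>h. g \<otimes> h \<otimes> inv g) ` C"
        then obtain k where "k \<in> C" "g \<otimes> k \<otimes> inv g \<in> C" "h = g \<otimes> k \<otimes> inv g" by blast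
        moreover from this have "k = \<one>" using trivial by blast
        ultimately show "h \<in> {\<one>}" using \<open>g \<in> carrier G\<close> by simp
      qed
      show "{\<one>} \<subseteq> C \<inter> (\<lambda>h. g \<otimes> h \<otimes> inv g) ` C"
        using subgroup.one_closed[OF C(1)] \<open>g \<in> carrier G\<close> by (auto intro!: image_eqI[where x = \<one>])
    qed
  qed
  ultimately show ?thesis using C unfolding frobenius_with_complement_def by blast
qed

lemma fixed_point_free_involution_norm_adj:
  assumes N: "N \<lhd> G" "finite N" and t: "t \<in> carrier G" "t \<noteq> \<one>" "t \<otimes> t = \<one>"
    and fpf: "\<And>m. m \<in> N \<Longrightarrow> t \<otimes> m = m \<otimes> t \<Longrightarrow> m = \<one>"
    and n: "n \<in> N" "n \<noteq> \<one>"
  shows "norm_adj G t n"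
proof -
  have sub: "subgroup N G" using N normal_imp_subgroup by blast
  have "cyc G n \<subseteq> N" unfolding cyc_def using sub n by (intro generate_subgroup_incl) auto
  then have "t \<otimes> k \<otimes> inv t = inv k" if "k \<in> cyc G n" for k
    using fixed_point_free_involution_inverts[OF N t(1,3) fpf] that by blast
  then have "normalises G (cyc G t) (cyc G n)"
    using sub n t subgroup.mem_carrier[OF sub] unfolding cyc_def
    by (intro normalises_if_involution_inverts[unfolded cyc_def] generate_is_subgroup) auto
  moreover have "t \<noteq> n" using fpf n by blast
  ultimately show ?thesis
    using t n subgroup.mem_carrier[OF sub] unfolding norm_adj_def by auto
qed

lemma centraliser_far_from_normal:
  assumes x: "x \<in> carrier G" "x \<noteq> \<one>" and y: "y \<in> cyc G x" "y \<noteq> \<one>"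
    and far: "norm_dist_set G x N > 3"
    and h: "h \<in> centraliser G y" "h \<noteq> \<one>" and n: "n \<in> N" "n \<noteq> \<one>"
  shows "h \<noteq> n \<and> \<not> norm_adj G h n"
proof
  have y_carr: "y \<in> carrier G" using y cyc_subset_carrier[OF x(1)] by blast
  have "y \<in> centraliser G x" using y cyc_subset_centraliser[OF x(1) x(1)] by blast
  then have xy: "x = y \<or> norm_adj G x y"
    using x y y_carr by (intro eq_or_norm_adj_if_commute) (auto simp: centraliser_def)
  have yh: "y = h \<or> norm_adj G y h"
    using h y y_carr by (intro eq_or_norm_adj_if_commute) (auto simp: centraliser_def)
  have "norm_dist G x n \<le> 3" if hn: "h = n \<or> norm_adj G h n"
  proof -
    have "norm_dist G x n \<le> norm_dist G x h + 1" using hn by (rule norm_dist_step)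
    also have "\<dots> \<le> norm_dist G x y + 1 + 1" using norm_dist_step[OF yh] by (simp add: add_right_mono)
    also have "\<dots> \<le> norm_dist G x x + 1 + 1 + 1" using norm_dist_step[OF xy] by (simp add: add_right_mono)
    also have "\<dots> = 3" using x by (simp add: norm_dist_self)
    finally show ?thesis .
  qed
  moreover have "norm_dist_set G x N \<le> norm_dist G x n"
    unfolding norm_dist_set_def using n by (intro INF_lower) auto
  ultimately have "\<not> (h = n \<or> norm_adj G h n)" using far by (meson leD order_trans)
  then show "h \<noteq> n" "\<not> norm_adj G h n" by auto
qed

lemma centraliser_fixed_point_free_on_normal:
  assumes x: "x \<in> carrier G" "x \<noteq> \<one>" and y: "y \<in> cyc G x" "y \<noteq> \<one>"
    and far: "norm_dist_set G x N > 3" and N: "subgroup N G"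
    and h: "h \<in> centraliser G y" and n: "n \<in> N" and comm: "h \<otimes> n = n \<otimes> h"
  shows "h = \<one> \<or> n = \<one>"
proof (rule ccontr)
  assume nontrivial: "\<not> (h = \<one> \<or> n = \<one>)"
  moreover have "h \<in> carrier G" "n \<in> carrier G"
    using h n subgroup.mem_carrier[OF N] by (auto simp: centraliser_def)
  ultimately have "h = n \<or> norm_adj G h n" using comm by (simp add: eq_or_norm_adj_if_commute)
  then show False using centraliser_far_from_normal[OF x y far h _ n] nontrivial by blast
qed

end

theorem mainTheorem10:
  fixes G (structure) and N :: "'a set" and x y :: 'a
  assumes "group G"
    and "finite (carrier G)"
    and "solvable G"
    and "minimal_normal G N"
    and "x \<in> carrier G" and "x \<noteq> \<one>"
    and "norm_dist_set G x N > 3"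
    and "y \<in> cyc G x"
    and "Factorial_Ring.prime (group.ord G y)"
  shows "frobenius_with_complement G (centraliser G y <#> N) (centraliser G y)
         \<and> odd (card (centraliser G y))"
proof
  interpret group G by fact
  let ?C = "centraliser G y"
  have y: "y \<in> carrier G" "y \<noteq> \<one>" using assms(5,8,9) cyc_subset_carrier by auto
  have C: "subgroup ?C G" "finite ?C" using y assms(2) subgroup_centraliser
    by (auto simp: centraliser_def)
  have N: "N \<lhd> G" "N \<noteq> {\<one>}" using assms(4) unfolding minimal_normal_def by auto
  have N_sub: "subgroup N G" using N(1) by (rule normal_imp_subgroup)
  have "finite N" by (rule finite_subset[OF subgroup.subset[OF N_sub] assms(2)])
  have far: "\<not> norm_adj G h n" if "h \<in> ?C" "h \<noteq> \<one>" "n \<in> N" "n \<noteq> \<one>" for h n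
    using centraliser_far_from_normal[OF assms(5,6,8) y(2) assms(7)] that by blast
  have fpf: "h = \<one> \<or> n = \<one>" if "h \<in> ?C" "n \<in> N" "h \<otimes> n = n \<otimes> h" for h n
    using centraliser_fixed_point_free_on_normal[OF assms(5,6,8) y(2) assms(7) N_sub] that by blast
  have "y \<in> ?C" using y by (simp add: centraliser_def)
  then show "frobenius_with_complement G (?C <#> N) ?C"
    using y N by (intro frobenius_if_fixed_point_free C(1) fpf) auto
  show "odd (card ?C)"
  proof
    assume "even (card ?C)"
    then obtain t where t: "t \<in> ?C" "t \<noteq> \<one>" "t \<otimes> t = \<one>" using involution_if_even_card C by blast
    obtain n where n: "n \<in> N" "n \<noteq> \<one>" using N(2) subgroup.one_closed[OF N_sub] by blast
    have "norm_adj G t n"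
      using t n fpf subgroup.mem_carrier[OF C(1)]
      by (intro fixed_point_free_involution_norm_adj[OF N(1) \<open>finite N\<close>]) auto
    then show False using far t n by blast
  qed
qed

end
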